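(* Let $G:\mathbb{N}\to\mathbb{R}$ satisfy $\lim_{k\to\infty}G(k)/k=0$ and $G(n)\ge0$ for all but finitely many $n$. Then for any $A\in\mathbb{N}$, the inequality $AG(n)-G(An)\ge0$ holds for infinitely many $n$. *)

theory Defs
  imports Complex_Main
begin

end

theory Submission
  imports Defs
begin

text \<open>If the conclusion failed, then eventually \<open>G (A n) > A G n\<close> and \<open>G n \<ge> 0\<close>. Hence some
  \<open>G m\<close> is strictly positive, and along \<open>m, A m, A\<^sup>2 m, \<dots>\<close> the ratio \<open>G n / n\<close> never
  decreases, so it cannot tend to \<open>0\<close>.\<close>

lemma ratio_mono_along_powers:
  fixes G :: "nat \<Rightarrow> real"
  assumes super: "\<And>n. n \<ge> N \<Longrightarrow> real A * G n \<le> G (A * n)"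
    and "A \<ge> 1" and "m \<ge> N" and "m > 0"
  shows "G m / real m \<le> G (A ^ k * m) / real (A ^ k * m)"
proof (induction k)
  case 0
  then show ?case by simp
next
  case (Suc k)
  have pos: "A ^ k * m > 0" using assms by simp
  have "A ^ k * m \<ge> N" using \<open>m \<ge> N\<close> \<open>A \<ge> 1\<close>
    by (metis le_trans one_le_power mult_le_mono1 mult_1)
  then have "real A * G (A ^ k * m) \<le> G (A ^ Suc k * m)"
    using super by (simp add: mult.assoc)
  then have "G (A ^ k * m) / real (A ^ k * m) \<le> G (A ^ Suc k * m) / real (A ^ Suc k * m)"
    using pos \<open>A \<ge> 1\<close> by (simp add: divide_simps mult.assoc algebra_simps)
  with Suc.IH show ?case by linarith
qed

lemma superhomogeneous_sublinear_nonpos: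
  fixes G :: "nat \<Rightarrow> real"
  assumes lim: "(\<lambda>k. G k / real k) \<longlonglongrightarrow> 0"
    and super: "\<And>n. n \<ge> N \<Longrightarrow> real A * G n \<le> G (A * n)"
    and "A \<ge> 2" and "m \<ge> N" and "m > 0"
  shows "G m \<le> 0"
proof -
  have "strict_mono (\<lambda>k. A ^ k * m)"
    using \<open>A \<ge> 2\<close> \<open>m > 0\<close> by (simp add: strict_mono_def power_strict_increasing)
  from LIMSEQ_subseq_LIMSEQ[OF lim this]
  have "(\<lambda>k. G (A ^ k * m) / real (A ^ k * m)) \<longlonglongrightarrow> 0"
    by (simp add: comp_def)
  moreover have "\<And>k. G m / real m \<le> G (A ^ k * m) / real (A ^ k * m)"
    using ratio_mono_along_powers[of N A G, OF super] assms by simp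
  ultimately have "G m / real m \<le> 0"
    by (intro LIMSEQ_le_const[of _ 0]) auto
  with \<open>m > 0\<close> show ?thesis by (simp add: divide_le_0_iff)
qed

theorem lemma1:
  fixes G :: "nat \<Rightarrow> real" and A :: nat
  assumes lim: "(\<lambda>k. G k / real k) \<longlonglongrightarrow> 0"
    and ev_nonneg: "finite {n. G n < 0}"
    and A_pos: "A \<ge> 1"
  shows "infinite {n. real A * G n - G (A * n) \<ge> 0}"
proof
  assume fin: "finite {n. real A * G n - G (A * n) \<ge> 0}"
  show False
  proof (cases "A = 1")
    case True
    with fin show False by simp
  next
    case False
    with A_pos have "A \<ge> 2" by simp
    from fin ev_nonneg obtain N
      where N: "\<And>n. n \<ge> N \<Longrightarrow> real A * G n < G (A * n) \<and> G n \<ge> 0"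
      by (metis (mono_tags, lifting) finite_Un finite_nat_set_iff_bounded_le
          Un_iff mem_Collect_eq not_less_eq_eq diff_ge_0_iff_ge not_le)
    define m where "m = A * (N + 1)"
    have "m \<ge> N" "m > 0" using \<open>A \<ge> 2\<close> by (simp_all add: m_def trans_le_add2)
    have "G m \<le> 0"
      using superhomogeneous_sublinear_nonpos[OF lim _ \<open>A \<ge> 2\<close> \<open>m \<ge> N\<close> \<open>m > 0\<close>] N
      by (simp add: less_imp_le)
    moreover have "G m > 0"
      using N[of "N + 1"] by (simp add: m_def) (smt (verit) of_nat_0_le_iff zero_le_mult_iff)
    ultimately show False by simp
  qed
qed

end
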